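(* Let $\xi_k(x)=\xi_{k1}x_1+\xi_{k2}x_2+\xi_{k0}$, $k=0,1,2$, be affine functions on $\mathbb{R}^2$, let $E$ be a segment contained in the line $\{x_2=mx_1+q\}$, and assume $\xi_{21}+m\xi_{22}=0$ and $\xi_2>0$ on $E$. Let $h(x)=\frac{\xi_1(x)^2}{\xi_2(x)}+\xi_0(x)+I_E(x)$. Then every piece of the conjugate $h^*$ that is a quadratic polynomial $\zeta_{11}s_1^2+\zeta_{12}s_1s_2+\zeta_{22}s_2^2+\zeta_{10}s_1+\zeta_{01}s_2+\zeta_{00}$ is parabolic, i.e. satisfies $\zeta_{12}^2-4\zeta_{11}\zeta_{22}=0$.
   Context: $I_E$ is the indicator function of $E$ ($0$ on $E$, $+\infty$ outside). The conjugate is $h^*(s)=\sup_{x\in\mathbb{R}^2}(s^Tx-h(x))$, a piecewise function of $s=(s_1,s_2)\in\mathbb{R}^2$ whose pieces are affine or quadratic polynomials. Such rational functions $\xi_1^2/\xi_2+\xi_0$ arise as pieces of the convex envelope of a bivariate quadratic over a polytope, and the restriction to an edge of the polytope on which $\xi_{21}+m\xi_{22}=0$ is the case in which a quadratic expression appears in the conjugate. *)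

theory Defs
  imports "HOL-Analysis.Analysis" "HOL-Library.Extended_Real"
begin

definition ind_set :: "(real \<times> real) set \<Rightarrow> real \<times> real \<Rightarrow> ereal" where
  "ind_set E x = (if x \<in> E then 0 else \<infinity>)"

definition conjugate :: "(real \<times> real \<Rightarrow> ereal) \<Rightarrow> real \<times> real \<Rightarrow> ereal" where
  "conjugate h s = (SUP x. ereal (fst s * fst x + snd s * snd x) - h x)"

definition aff :: "real \<Rightarrow> real \<Rightarrow> real \<Rightarrow> real \<times> real \<Rightarrow> real" where
  "aff c1 c2 c0 x = c1 * fst x + c2 * snd x + c0"

end

theory Submission
  imports Defs
begin

text \<open>
  Since \<open>h = \<infinity>\<close> off the line through \<open>a\<close> and \<open>b\<close>, moving \<open>s\<close> along a normal
  vector \<open>n\<close> of that line changes \<open>s \<bullet> x - h x\<close> by the same amount \<open>e (n \<bullet> a)\<close> at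
  every \<open>x\<close> where it is not \<open>-\<infinity>\<close>; hence \<open>h*(s + e n) = h*(s) + e (n \<bullet> a)\<close>. A
  quadratic piece of \<open>h*\<close> is therefore affine along \<open>n \<noteq> 0\<close>, so \<open>n\<close> lies in the kernel
  of its Hessian, whose determinant is minus the discriminant.
\<close>

lemma inner_real_pair: "inner s x = fst s * fst x + snd s * snd (x :: real \<times> real)"
  by (simp add: inner_prod_def)

lemma conjugate_add_scaleR_normal:
  assumes off_line: "\<And>x. inner n x \<noteq> c \<Longrightarrow> h x = \<infinity>"
  shows "conjugate h (s + e *\<^sub>R n) = conjugate h s + ereal (e * c)"
proof -
  have "ereal (inner (s + e *\<^sub>R n) x) - h x = (ereal (inner s x) - h x) + ereal (e * c)" for x
  proof (cases "inner n x = c")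
    case True
    then have "inner (s + e *\<^sub>R n) x = inner s x + e * c"
      by (simp add: inner_add_left)
    then show ?thesis
      by (cases "h x") simp_all
  next
    case False
    then show ?thesis
      using off_line by simp
  qed
  then show ?thesis
    unfolding conjugate_def inner_real_pair[symmetric]
    by (simp add: SUP_ereal_add_left)
qed

definition bivariate_quadratic :: "real \<Rightarrow> real \<Rightarrow> real \<Rightarrow> real \<Rightarrow> real \<Rightarrow> real \<Rightarrow> real \<times> real \<Rightarrow> real" where
  "bivariate_quadratic z11 z12 z22 z10 z01 z00 s =
     z11 * (fst s)\<^sup>2 + z12 * fst s * snd s + z22 * (snd s)\<^sup>2 + z10 * fst s + z01 * snd s + z00"

lemma quadratic_affine_along_direction_discriminant:
  fixes z11 z12 z22 z10 z01 z00 v1 v2 c e p1 p2 :: real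
  defines "Q \<equiv> bivariate_quadratic z11 z12 z22 z10 z01 z00"
  assumes at_p: "Q (p1 + e * v1, p2 + e * v2) = Q (p1, p2) + e * c"
    and at_p_right: "Q (p1 + e + e * v1, p2 + e * v2) = Q (p1 + e, p2) + e * c"
    and at_p_up: "Q (p1 + e * v1, p2 + e + e * v2) = Q (p1, p2 + e) + e * c"
    and "e \<noteq> 0" and "(v1, v2) \<noteq> (0, 0)"
  shows "z12\<^sup>2 - 4 * z11 * z22 = 0"
proof -
  \<comment> \<open>Second differences of the three identities: the Hessian annihilates \<open>(v1, v2)\<close>.\<close>
  have "e * e * (2 * z11 * v1 + z12 * v2) = 0"
    using at_p at_p_right unfolding Q_def bivariate_quadratic_def by (simp add: power2_eq_square algebra_simps)
  then have row1: "2 * z11 * v1 + z12 * v2 = 0"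
    using \<open>e \<noteq> 0\<close> by simp
  have "e * e * (z12 * v1 + 2 * z22 * v2) = 0"
    using at_p at_p_up unfolding Q_def bivariate_quadratic_def by (simp add: power2_eq_square algebra_simps)
  then have row2: "z12 * v1 + 2 * z22 * v2 = 0"
    using \<open>e \<noteq> 0\<close> by simp
  have "v1 * (z12\<^sup>2 - 4 * z11 * z22) = z12 * (z12 * v1 + 2 * z22 * v2) - 2 * z22 * (2 * z11 * v1 + z12 * v2)"
    "v2 * (z12\<^sup>2 - 4 * z11 * z22) = z12 * (2 * z11 * v1 + z12 * v2) - 2 * z11 * (z12 * v1 + 2 * z22 * v2)"
    by (simp_all add: power2_eq_square algebra_simps)
  then show ?thesis
    using row1 row2 \<open>(v1, v2) \<noteq> (0, 0)\<close> by auto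
qed

lemma eventually_add_scaleR_in_open:
  fixes s w :: "'a :: real_normed_vector"
  assumes "open U" "s \<in> U"
  shows "\<forall>\<^sub>F e in at 0. s + e *\<^sub>R w \<in> U"
proof -
  have "((\<lambda>e. s + e *\<^sub>R w) \<longlongrightarrow> s + 0 *\<^sub>R w) (at 0)"
    by (intro tendsto_intros)
  then show ?thesis
    using assms by (simp add: topological_tendstoD)
qed

lemma quadratic_affine_along_direction_on_open_discriminant:
  fixes v :: "real \<times> real" and z11 z12 z22 z10 z01 z00 c :: real
  defines "Q \<equiv> bivariate_quadratic z11 z12 z22 z10 z01 z00"
  assumes "open U" "U \<noteq> {}" "v \<noteq> 0"
    and affine: "\<And>s e. s \<in> U \<Longrightarrow> s + e *\<^sub>R v \<in> U \<Longrightarrow> Q (s + e *\<^sub>R v) = Q s + e * c"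
  shows "z12\<^sup>2 - 4 * z11 * z22 = 0"
proof -
  obtain p where "p \<in> U"
    using \<open>U \<noteq> {}\<close> by blast
  have "\<forall>\<^sub>F e in at (0::real). e \<noteq> 0 \<and> p + e *\<^sub>R v \<in> U
      \<and> p + e *\<^sub>R (1, 0) \<in> U \<and> p + e *\<^sub>R ((1, 0) + v) \<in> U
      \<and> p + e *\<^sub>R (0, 1) \<in> U \<and> p + e *\<^sub>R ((0, 1) + v) \<in> U"
    by (intro eventually_conj eventually_add_scaleR_in_open \<open>open U\<close> \<open>p \<in> U\<close>)
      (simp add: eventually_at_filter)
  then obtain e :: real where "e \<noteq> 0" and in_U: "p + e *\<^sub>R v \<in> U"
      "p + e *\<^sub>R (1, 0) \<in> U" "p + e *\<^sub>R ((1, 0) + v) \<in> U"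
      "p + e *\<^sub>R (0, 1) \<in> U" "p + e *\<^sub>R ((0, 1) + v) \<in> U"
    using eventually_happens' [OF at_neq_bot] by blast
  obtain p1 p2 v1 v2 where "p = (p1, p2)" "v = (v1, v2)"
    by fastforce
  have "Q (p1 + e * v1, p2 + e * v2) = Q (p1, p2) + e * c"
       "Q (p1 + e + e * v1, p2 + e * v2) = Q (p1 + e, p2) + e * c"
       "Q (p1 + e * v1, p2 + e + e * v2) = Q (p1, p2 + e) + e * c"
    using affine[of p e] affine[of "p + e *\<^sub>R (1, 0)" e] affine[of "p + e *\<^sub>R (0, 1)" e]
      \<open>p \<in> U\<close> in_U \<open>p = (p1, p2)\<close> \<open>v = (v1, v2)\<close> by (simp_all add: add.assoc distrib_left)
  moreover have "(v1, v2) \<noteq> (0, 0)"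
    using \<open>v \<noteq> 0\<close> \<open>v = (v1, v2)\<close> by (simp add: zero_prod_def)
  ultimately show ?thesis
    unfolding Q_def by (rule quadratic_affine_along_direction_discriminant[OF _ _ _ \<open>e \<noteq> 0\<close>])
qed

theorem proposition4:
  fixes \<xi>01 \<xi>02 \<xi>00 \<xi>11 \<xi>12 \<xi>10 \<xi>21 \<xi>22 \<xi>20 m q :: real
    and a b :: "real \<times> real"
    and E :: "(real \<times> real) set"
    and h :: "real \<times> real \<Rightarrow> ereal"
    and U :: "(real \<times> real) set"
    and \<zeta>11 \<zeta>12 \<zeta>22 \<zeta>10 \<zeta>01 \<zeta>00 :: real
  assumes seg: "E = closed_segment a b" "a \<noteq> b"
    and on_line: "snd a = m * fst a + q" "snd b = m * fst b + q"
    and slope: "\<xi>21 + m * \<xi>22 = 0"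
    and pos: "\<forall>x\<in>E. aff \<xi>21 \<xi>22 \<xi>20 x > 0"
    and h_def: "\<forall>x. h x = ereal ((aff \<xi>11 \<xi>12 \<xi>10 x)\<^sup>2 / aff \<xi>21 \<xi>22 \<xi>20 x
                                 + aff \<xi>01 \<xi>02 \<xi>00 x) + ind_set E x"
    and piece: "open U" "U \<noteq> {}"
    and quad: "\<forall>s\<in>U. conjugate h s = ereal (\<zeta>11 * (fst s)\<^sup>2 + \<zeta>12 * fst s * snd s
                 + \<zeta>22 * (snd s)\<^sup>2 + \<zeta>10 * fst s + \<zeta>01 * snd s + \<zeta>00)"
  shows "\<zeta>12\<^sup>2 - 4 * \<zeta>11 * \<zeta>22 = 0"
proof -
  define n where "n = (snd a - snd b, fst b - fst a)"
  have "n \<noteq> 0"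
    using seg(2) by (auto simp: n_def prod_eq_iff)
  have "E \<subseteq> {x. inner n x = inner n a}"
    unfolding seg(1)
    by (intro closed_segment_subset convex_hyperplane) (auto simp: n_def inner_real_pair algebra_simps)
  then have "h x = \<infinity>" if "inner n x \<noteq> inner n a" for x
  proof -
    have "x \<notin> E"
      using that \<open>E \<subseteq> _\<close> by blast
    then show ?thesis
      using h_def[rule_format, of x] by (simp add: ind_set_def)
  qed
  then have shift: "conjugate h (s + e *\<^sub>R n) = conjugate h s + ereal (e * inner n a)" for s e
    by (rule conjugate_add_scaleR_normal)
  let ?Q = "bivariate_quadratic \<zeta>11 \<zeta>12 \<zeta>22 \<zeta>10 \<zeta>01 \<zeta>00"
  show ?thesis
  proof (rule quadratic_affine_along_direction_on_open_discriminant[OF piece \<open>n \<noteq> 0\<close>])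
    fix s e
    assume "s \<in> U" "s + e *\<^sub>R n \<in> U"
    then have "ereal (?Q (s + e *\<^sub>R n)) = ereal (?Q s) + ereal (e * inner n a)"
      using quad shift[of s e] unfolding bivariate_quadratic_def by metis
    then show "?Q (s + e *\<^sub>R n) = ?Q s + e * inner n a"
      by simp
  qed
qed

end
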